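(* Let $(X,\mathrm{dist})$ be a metric space and $\Sigma$ a compact metric space. Let $T(h):\Sigma\to\Sigma$, $h\ge0$, be a semigroup with $T(h)\Sigma=\Sigma$ for all $h\ge0$, and let $\{U_\sigma(t,\tau)\}_{\sigma\in\Sigma}$ be a family of processes on $X$ satisfying $U_\sigma(h+t,h+\tau)=U_{T(h)\sigma}(t,\tau)$ for all $\sigma\in\Sigma$, $h\ge0$, $t\ge\tau$. Assume the family is uniformly asymptotically compact (which, when $X$ is complete, is equivalent to being totally uniformly dissipative), and let $A_\Sigma$ be its uniform global attractor. If the family is asymptotically closed with respect to some sequence $h_k$ and $T(h_k)$ is continuous for every $k$, then $A_\Sigma=\bigcup_{\sigma\in\Sigma}\mathcal{K}_\sigma(0)$.
   Context: A process on $X$ is a family of maps $U(t,\tau):X\to X$, indexed by reals $t\ge\tau$, with $U(\tau,\tau)=\mathrm{id}_X$ and $U(t,\tau)=U(t,s)U(s,\tau)$ for $t\ge s\ge\tau$. For nonempty $B,C\subset X$, $\delta_X(B,C)=\sup_{x\in B}\inf_{\xi\in C}\mathrm{dist}(x,\xi)$. A set $K\subset X$ is uniformly attracting if for every bounded $C\subset X$, $\lim_{t-\tau\to\infty}\sup_{\sigma\in\Sigma}\delta_X(U_\sigma(t,\tau)C,K)=0$. The family is uniformly asymptotically compact if there is a compact uniformly attracting set; the uniform global attractor $A_\Sigma$ is the compact uniformly attracting set contained in every compact uniformly attracting set. Total uniform dissipativity: for every $\varepsilon>0$ there is a finite set $M_\varepsilon\subset X$ such that its open $\varepsilon$-neighborhood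 is uniformly absorbing, i.e. for every bounded $C\subset X$ there is $t_e$ with $U_\sigma(t,\tau)C$ contained in it for all $\sigma$ whenever $t-\tau\ge t_e$. The family is asymptotically closed with respect to a (finite with at least two terms, or infinite) sequence $0=h_0<h_1<h_2<\cdots$ if whenever $\sigma_n\to\sigma\in\Sigma$ and $U_{\sigma_n}(h_k,0)x_n\to\xi^k\in X$ as $n\to\infty$ for every $k$, then $U_\sigma(h_k,0)\xi^0=\xi^k$ for every $k$. For $\sigma\in\Sigma$, a complete bounded trajectory of $U_\sigma(t,\tau)$ is a function $x:\mathbb{R}\to X$ with bounded range and $x(s)=U_\sigma(s,\tau)x(\tau)$ for all $s\ge\tau$, $\tau\in\mathbb{R}$; $\mathcal{K}_\sigma(t)=\{x(t): x$ a complete bounded trajectory of $U_\sigma(t,\tau)\}$. *)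

theory Defs
  imports "HOL-Analysis.Analysis"
begin

text \<open>A family of processes on X (the whole type 'a), indexed by symbols in the
carrier set Sig. U sigma t tau is the map U_sigma(t,tau), meaningful for tau \<le> t.\<close>

definition process_family :: "'b set \<Rightarrow> ('b \<Rightarrow> real \<Rightarrow> real \<Rightarrow> 'a \<Rightarrow> 'a) \<Rightarrow> bool" where
  "process_family Sig U \<longleftrightarrow>
     (\<forall>\<sigma>\<in>Sig. (\<forall>\<tau>. U \<sigma> \<tau> \<tau> = id) \<and>
        (\<forall>t s \<tau>. \<tau> \<le> s \<and> s \<le> t \<longrightarrow> U \<sigma> t \<tau> = U \<sigma> t s \<circ> U \<sigma> s \<tau>))"

definition semigroup_on :: "'b set \<Rightarrow> (real \<Rightarrow> 'b \<Rightarrow> 'b) \<Rightarrow> bool" where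
  "semigroup_on Sig T \<longleftrightarrow>
     (\<forall>h\<ge>0. T h ` Sig \<subseteq> Sig) \<and>
     (\<forall>\<sigma>\<in>Sig. T 0 \<sigma> = \<sigma>) \<and>
     (\<forall>h1\<ge>0. \<forall>h2\<ge>0. \<forall>\<sigma>\<in>Sig. T (h1 + h2) \<sigma> = T h1 (T h2 \<sigma>))"

text \<open>Uniform attraction: for each bounded C,
  lim_{t-tau\<rightarrow>\<infinity>} sup_sigma delta(U_sigma(t,tau) C, K) = 0, written out with epsilons
  (delta(B,K) < eps for all large t - tau iff every point of B is eps-close to some point of K).\<close>

definition uniformly_attracting :: "'b set \<Rightarrow> ('b \<Rightarrow> real \<Rightarrow> real \<Rightarrow> 'a::metric_space \<Rightarrow> 'a) \<Rightarrow> 'a set \<Rightarrow> bool" where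
  "uniformly_attracting Sig U K \<longleftrightarrow>
     (\<forall>C. bounded C \<longrightarrow>
        (\<forall>\<epsilon>>0. \<exists>L. \<forall>t \<tau>. \<tau> \<le> t \<and> t - \<tau> \<ge> L \<longrightarrow>
           (\<forall>\<sigma>\<in>Sig. \<forall>x\<in>C. \<exists>k\<in>K. dist (U \<sigma> t \<tau> x) k < \<epsilon>)))"

definition uniformly_asymptotically_compact :: "'b set \<Rightarrow> ('b \<Rightarrow> real \<Rightarrow> real \<Rightarrow> 'a::metric_space \<Rightarrow> 'a) \<Rightarrow> bool" where
  "uniformly_asymptotically_compact Sig U \<longleftrightarrow> (\<exists>K. compact K \<and> uniformly_attracting Sig U K)"

definition uniform_global_attractor :: "'b set \<Rightarrow> ('b \<Rightarrow> real \<Rightarrow> real \<Rightarrow> 'a::metric_space \<Rightarrow> 'a) \<Rightarrow> 'a set \<Rightarrow> bool" where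
  "uniform_global_attractor Sig U A \<longleftrightarrow>
     compact A \<and> uniformly_attracting Sig U A \<and>
     (\<forall>K. compact K \<and> uniformly_attracting Sig U K \<longrightarrow> A \<subseteq> K)"

text \<open>Admissible sequence 0 = h_0 < h_1 < ...: indexed by I, which is either all of nat
  (infinite sequence) or {..<n} with n \<ge> 2 (finite sequence with at least two terms).\<close>

definition admissible_seq :: "nat set \<Rightarrow> (nat \<Rightarrow> real) \<Rightarrow> bool" where
  "admissible_seq I h \<longleftrightarrow> (I = UNIV \<or> (\<exists>n\<ge>2. I = {..<n})) \<and> h 0 = 0 \<and> strict_mono_on I h"

definition asymptotically_closed :: "'b::metric_space set \<Rightarrow> ('b \<Rightarrow> real \<Rightarrow> real \<Rightarrow> 'a::metric_space \<Rightarrow> 'a) \<Rightarrow> nat set \<Rightarrow> (nat \<Rightarrow> real) \<Rightarrow> bool" where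
  "asymptotically_closed Sig U I h \<longleftrightarrow>
     (\<forall>\<sigma>s \<sigma> xs \<xi>. (\<forall>n. \<sigma>s n \<in> Sig) \<and> \<sigma> \<in> Sig \<and> \<sigma>s \<longlonglongrightarrow> \<sigma> \<and>
        (\<forall>k\<in>I. (\<lambda>n. U (\<sigma>s n) (h k) 0 (xs n)) \<longlonglongrightarrow> \<xi> k)
        \<longrightarrow> (\<forall>k\<in>I. U \<sigma> (h k) 0 (\<xi> 0) = \<xi> k))"

definition complete_bounded_trajectory :: "('b \<Rightarrow> real \<Rightarrow> real \<Rightarrow> 'a::metric_space \<Rightarrow> 'a) \<Rightarrow> 'b \<Rightarrow> (real \<Rightarrow> 'a) \<Rightarrow> bool" where
  "complete_bounded_trajectory U \<sigma> x \<longleftrightarrow>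
     bounded (range x) \<and> (\<forall>s \<tau>. \<tau> \<le> s \<longrightarrow> x s = U \<sigma> s \<tau> (x \<tau>))"

definition kernel_section :: "('b \<Rightarrow> real \<Rightarrow> real \<Rightarrow> 'a::metric_space \<Rightarrow> 'a) \<Rightarrow> 'b \<Rightarrow> real \<Rightarrow> 'a set" where
  "kernel_section U \<sigma> t = {x t | x. complete_bounded_trajectory U \<sigma> x}"

end

theory Submission
  imports Defs "HOL-Library.Diagonal_Subsequence"
begin

text \<open>Points of kernel sections lie in \<open>A\<close>: their bounded trajectories come from
  arbitrarily far in the past and \<open>A\<close> is closed and attracting.
  Conversely, minimality of \<open>A\<close> makes every \<open>a \<in> A\<close> a limit of states
  \<open>U\<^sub>\<sigma>\<^sub>n(s\<^sub>n, 0) w\<^sub>n\<close> with \<open>s\<^sub>n \<rightarrow> \<infinity>\<close> and \<open>w\<^sub>n\<close> in a fixed bounded absorbing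
  set; by compactness of \<open>\<Sigma>\<close> the symbols \<open>T(s\<^sub>n)\<sigma>\<^sub>n\<close> may be assumed to converge,
  so \<open>(\<sigma>, a)\<close> is an \<open>\<omega>\<close>-limit point of the skew-product flow. Asymptotic
  closedness and continuity of \<open>T(h\<^sub>1)\<close> show that every such \<open>\<omega>\<close>-limit point is the
  image at time \<open>h\<^sub>1\<close> of another one. Iterating yields a backward orbit in \<open>A\<close> which
  glues to a complete bounded trajectory of \<open>U\<^sub>\<sigma>\<close> passing through \<open>a\<close> at time 0.\<close>

definition approaches :: "(nat \<Rightarrow> 'a::metric_space) \<Rightarrow> 'a set \<Rightarrow> bool" where
  "approaches f K \<longleftrightarrow> (\<forall>e>0. eventually (\<lambda>n. \<exists>k\<in>K. dist (f n) k < e) sequentially)"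

lemma approaches_subseq: "approaches f K \<Longrightarrow> strict_mono r \<Longrightarrow> approaches (f \<circ> r) K"
  unfolding approaches_def using eventually_subseq by fastforce

lemma approaches_limit_mem:
  assumes "approaches f K" "f \<longlonglongrightarrow> l" "closed K"
  shows "l \<in> K"
proof -
  have "\<exists>k\<in>K. dist k l < e" if "e > 0" for e
  proof -
    have e2: "0 < e/2" using that by simp
    have "eventually (\<lambda>n. dist (f n) l < e/2) sequentially"
      using assms(2) e2 unfolding tendsto_iff by blast
    moreover have "eventually (\<lambda>n. \<exists>k\<in>K. dist (f n) k < e/2) sequentially"
      using assms(1) e2 unfolding approaches_def by blast
    ultimately have "eventually (\<lambda>n. dist (f n) l < e/2 \<and> (\<exists>k\<in>K. dist (f n) k < e/2)) sequentially"
      by (rule eventually_conj)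
    then obtain n k where "k \<in> K" "dist (f n) l < e/2" "dist (f n) k < e/2"
      using eventually_happens'[OF trivial_limit_sequentially] by blast
    then show ?thesis by (metis dist_commute dist_triangle_half_l)
  qed
  then show ?thesis using closed_approachable[OF assms(3)] by blast
qed

lemma approaches_compact_convergent_subseq:
  assumes "approaches f K" "compact K"
  obtains r l where "strict_mono r" "l \<in> K" "(f \<circ> r) \<longlonglongrightarrow> l"
proof -
  have "K \<noteq> {}"
    using assms(1) unfolding approaches_def eventually_sequentially
    by (metis all_not_in_conv le_refl zero_less_one)
  have "\<exists>k\<in>K. \<forall>y\<in>K. dist (f n) k \<le> dist (f n) y" for n
    by (rule continuous_attains_inf[OF assms(2) \<open>K \<noteq> {}\<close>]) (intro continuous_intros)
  then obtain g where g: "\<And>n. g n \<in> K" "\<And>n y. y \<in> K \<Longrightarrow> dist (f n) (g n) \<le> dist (f n) y"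
    by metis
  obtain l r where lr: "l \<in> K" "strict_mono r" "(g \<circ> r) \<longlonglongrightarrow> l"
    using seq_compactE[OF compact_imp_seq_compact[OF assms(2)]] g(1) by metis
  have "(\<lambda>n. dist (f n) (g n)) \<longlonglongrightarrow> 0"
    unfolding tendsto_iff
  proof (intro allI impI)
    fix e :: real assume "e > 0"
    then have "eventually (\<lambda>n. \<exists>k\<in>K. dist (f n) k < e) sequentially"
      using assms(1) unfolding approaches_def by blast
    then show "eventually (\<lambda>n. dist (dist (f n) (g n)) 0 < e) sequentially"
      by eventually_elim (use g(2) order_le_less_trans in \<open>fastforce simp: dist_real_def\<close>)
  qed
  then have "(\<lambda>n. dist (f (r n)) (g (r n))) \<longlonglongrightarrow> 0"
    using LIMSEQ_subseq_LIMSEQ[OF _ lr(2)] by (simp add: o_def)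
  moreover have "(\<lambda>n. dist (g (r n)) l) \<longlonglongrightarrow> 0"
    using tendsto_dist_iff[THEN iffD1, OF lr(3)] by (simp add: o_def)
  ultimately have sum: "(\<lambda>n. dist (f (r n)) (g (r n)) + dist (g (r n)) l) \<longlonglongrightarrow> 0"
    using tendsto_add by fastforce
  have "(\<lambda>n. dist (f (r n)) l) \<longlonglongrightarrow> 0"
    by (rule tendsto_sandwich[OF _ _ tendsto_const sum]) (simp_all add: dist_triangle)
  then have "(f \<circ> r) \<longlonglongrightarrow> l"
    using tendsto_dist_iff[THEN iffD2, of "f \<circ> r" l sequentially] by (simp add: o_def)
  with lr show thesis by (intro that)
qed

lemma approaches_compact_diagonal_subseq:
  fixes f :: "nat \<Rightarrow> nat \<Rightarrow> 'a::metric_space"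
  assumes "\<And>k. k \<in> I \<Longrightarrow> approaches (f k) K" "compact K"
  obtains r where "strict_mono r" "\<And>k. k \<in> I \<Longrightarrow> convergent (f k \<circ> r)"
proof -
  interpret subseqs "\<lambda>k s. k \<in> I \<longrightarrow> convergent (f k \<circ> s)"
  proof
    fix k and s :: "nat \<Rightarrow> nat" assume s: "strict_mono s"
    show "\<exists>r'. strict_mono r' \<and> (k \<in> I \<longrightarrow> convergent (f k \<circ> (s \<circ> r')))"
    proof (cases "k \<in> I")
      case True
      then obtain r' l where "strict_mono r'" "(f k \<circ> s \<circ> r') \<longlonglongrightarrow> l"
        using approaches_compact_convergent_subseq approaches_subseq[OF assms(1) s] assms(2) by metis
      then show ?thesis by (auto simp: convergent_def o_assoc)
    qed (use strict_mono_id in blast)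
  qed
  have "convergent (f k \<circ> diagseq)" if "k \<in> I" for k
  proof -
    have "k \<in> I \<longrightarrow> convergent (f k \<circ> (diagseq \<circ> (+) (Suc k)))"
      by (rule diagseq_holds) (auto simp: o_assoc intro: convergent_subseq_convergent)
    then have "convergent (\<lambda>n. (f k \<circ> diagseq) (n + Suc k))"
      using that by (simp add: o_def add.commute)
    then show ?thesis by (simp only: convergent_ignore_initial_segment)
  qed
  with subseq_diagseq show thesis by (rule that)
qed

lemma bounded_thickening:
  assumes "bounded K"
  shows "bounded {y. \<exists>k\<in>K. dist y k < e}"
proof -
  obtain c R where R: "\<forall>k\<in>K. dist c k \<le> R"
    using assms unfolding bounded_def by blast
  have "dist c y \<le> R + e" if "k \<in> K" "dist y k < e" for y k
    using R[rule_format, OF that(1)] that(2) dist_triangle[of c y k] dist_commute[of k y] by linarith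
  then have "{y. \<exists>k\<in>K. dist y k < e} \<subseteq> cball c (R + e)"
    by auto
  then show ?thesis using bounded_cball bounded_subset by blast
qed

lemma filterlim_at_top_delay:
  fixes s :: "nat \<Rightarrow> real"
  assumes "filterlim s at_top sequentially"
  shows "filterlim (\<lambda>n. max 0 (s n - H)) at_top sequentially"
    and "eventually (\<lambda>n. max 0 (s n - H) + H = s n) sequentially"
proof -
  show "filterlim (\<lambda>n. max 0 (s n - H)) at_top sequentially"
    using filterlim_tendsto_add_at_top[OF tendsto_const assms, of "- H"]
    by (rule filterlim_at_top_mono) simp
  have "eventually (\<lambda>n. H \<le> s n) sequentially" using assms by (simp add: filterlim_at_top)
  then show "eventually (\<lambda>n. max 0 (s n - H) + H = s n) sequentially"
    by eventually_elim simp
qed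

lemma uniformly_attracting_approaches:
  assumes "uniformly_attracting Sig U K" "bounded C"
    and "\<And>n. \<sigma>s n \<in> Sig" "\<And>n. w n \<in> C" "\<And>n. \<tau>s n \<le> ts n"
    and "filterlim (\<lambda>n. ts n - \<tau>s n) at_top sequentially"
  shows "approaches (\<lambda>n. U (\<sigma>s n) (ts n) (\<tau>s n) (w n)) K"
  unfolding approaches_def
proof (intro allI impI)
  fix e :: real assume "e > 0"
  then obtain L where L: "\<forall>t \<tau>. \<tau> \<le> t \<and> L \<le> t - \<tau> \<longrightarrow> (\<forall>\<sigma>\<in>Sig. \<forall>x\<in>C. \<exists>k\<in>K. dist (U \<sigma> t \<tau> x) k < e)"
    using assms(1)[unfolded uniformly_attracting_def, rule_format, OF assms(2)] by blast
  have "eventually (\<lambda>n. L \<le> ts n - \<tau>s n) sequentially"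
    using assms(6) by (simp add: filterlim_at_top)
  then show "eventually (\<lambda>n. \<exists>k\<in>K. dist (U (\<sigma>s n) (ts n) (\<tau>s n) (w n)) k < e) sequentially"
    by eventually_elim (use L assms(3-5) in blast)
qed

lemma kernel_section_subset_attracting:
  assumes "uniformly_attracting Sig U K" "closed K" "\<sigma> \<in> Sig"
  shows "kernel_section U \<sigma> t \<subseteq> K"
proof
  fix y assume "y \<in> kernel_section U \<sigma> t"
  then obtain x where x: "complete_bounded_trajectory U \<sigma> x" "y = x t"
    unfolding kernel_section_def by blast
  have "\<exists>k\<in>K. dist k y < e" if e: "e > 0" for e
  proof -
    have "bounded (range x)" using x(1) unfolding complete_bounded_trajectory_def by blast
    then obtain L where L: "\<forall>s \<tau>. \<tau> \<le> s \<and> L \<le> s - \<tau> \<longrightarrow> (\<forall>\<sigma>\<in>Sig. \<forall>z\<in>range x. \<exists>k\<in>K. dist (U \<sigma> s \<tau> z) k < e)"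
      using assms(1)[unfolded uniformly_attracting_def, rule_format, OF _ e] by blast
    define \<tau> where "\<tau> = t - max L 0"
    have "\<tau> \<le> t" "L \<le> t - \<tau>" by (simp_all add: \<tau>_def)
    then obtain k where "k \<in> K" "dist (U \<sigma> t \<tau> (x \<tau>)) k < e"
      using L assms(3) by blast
    moreover have "y = U \<sigma> t \<tau> (x \<tau>)"
      using x \<open>\<tau> \<le> t\<close> unfolding complete_bounded_trajectory_def by simp
    ultimately show ?thesis by (auto simp: dist_commute)
  qed
  then show "y \<in> K" using closed_approachable[OF assms(2)] by blast
qed

lemma process_backward_orbit_trajectory:
  assumes "process_family Sig U" "\<sigma> \<in> Sig"
    and "decseq p" "\<And>t. \<exists>m. p m \<le> t"
    and "\<And>m. U \<sigma> (p m) (p (Suc m)) (\<xi> (Suc m)) = \<xi> m"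
  obtains x where "\<And>s \<tau>. \<tau> \<le> s \<Longrightarrow> x s = U \<sigma> s \<tau> (x \<tau>)"
    and "\<And>t m. p m \<le> t \<Longrightarrow> x t = U \<sigma> t (p m) (\<xi> m)"
proof -
  have comp: "U \<sigma> t \<tau> = U \<sigma> t s \<circ> U \<sigma> s \<tau>" if "\<tau> \<le> s" "s \<le> t" for t s \<tau>
    using assms(1,2) that unfolding process_family_def by blast
  have stable: "U \<sigma> t (p (m + j)) (\<xi> (m + j)) = U \<sigma> t (p m) (\<xi> m)" if "p m \<le> t" for t m j
  proof (induction j)
    case (Suc j)
    have le: "p (Suc (m + j)) \<le> p (m + j)" "p (m + j) \<le> t"
      using decseqD[OF assms(3), of m "m + j"] decseqD[OF assms(3), of "m + j" "Suc (m + j)"] that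
      by auto
    then have "U \<sigma> t (p (Suc (m + j))) (\<xi> (Suc (m + j))) = U \<sigma> t (p (m + j)) (\<xi> (m + j))"
      using comp[OF le] assms(5)[of "m + j"] by simp
    then show ?case using Suc by simp
  qed simp
  have indep: "U \<sigma> t (p m) (\<xi> m) = U \<sigma> t (p m') (\<xi> m')" if "p m \<le> t" "p m' \<le> t" for t m m'
    using stable[OF that(1), of "m' - m"] stable[OF that(2), of "m - m'"]
    by (cases "m \<le> m'") auto
  define x where "x t = U \<sigma> t (p (SOME m. p m \<le> t)) (\<xi> (SOME m. p m \<le> t))" for t
  have x: "x t = U \<sigma> t (p m) (\<xi> m)" if "p m \<le> t" for t m
    unfolding x_def using indep[OF someI_ex[OF assms(4)] that] .
  show thesis
  proof (rule that[OF _ x])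
    fix s \<tau> :: real assume "\<tau> \<le> s"
    obtain m where "p m \<le> \<tau>" using assms(4) by blast
    with \<open>\<tau> \<le> s\<close> show "x s = U \<sigma> s \<tau> (x \<tau>)"
      using x[OF \<open>p m \<le> \<tau>\<close>] x[OF order_trans[OF \<open>p m \<le> \<tau>\<close> \<open>\<tau> \<le> s\<close>]]
        comp[of "p m" \<tau> s] by simp
  qed
qed

lemma admissible_seqD:
  assumes "admissible_seq I h"
  shows "0 \<in> I" "1 \<in> I" "h 0 = 0" "0 < h 1" "\<And>k. k \<in> I \<Longrightarrow> 0 \<le> h k"
proof -
  show I: "0 \<in> I" "1 \<in> I" and h0: "h 0 = 0"
    using assms unfolding admissible_seq_def by auto
  have mono: "strict_mono_on I h" using assms unfolding admissible_seq_def by blast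
  show "0 < h 1" using strict_mono_onD[OF mono I] h0 by simp
  show "0 \<le> h k" if "k \<in> I" for k
    using strict_mono_onD[OF mono I(1) that] h0 by (cases "k = 0") auto
qed

lemma asymptotically_closedD:
  assumes "asymptotically_closed Sig U I h" "\<And>n. \<sigma>s n \<in> Sig" "\<sigma> \<in> Sig" "\<sigma>s \<longlonglongrightarrow> \<sigma>"
    and "\<And>k. k \<in> I \<Longrightarrow> (\<lambda>n. U (\<sigma>s n) (h k) 0 (xs n)) \<longlonglongrightarrow> \<xi> k" "k \<in> I"
  shows "U \<sigma> (h k) 0 (\<xi> 0) = \<xi> k"
  using assms unfolding asymptotically_closed_def by blast

lemma asymptotically_closed_convergent_subseq:
  assumes "asymptotically_closed Sig U I h" "compact Sig" "compact K"
    and "\<And>n. \<sigma>s n \<in> Sig" "\<And>k. k \<in> I \<Longrightarrow> approaches (\<lambda>n. U (\<sigma>s n) (h k) 0 (x n)) K"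
  obtains r \<sigma> \<xi> where "strict_mono r" "\<sigma> \<in> Sig" "(\<lambda>n. \<sigma>s (r n)) \<longlonglongrightarrow> \<sigma>"
    and "\<And>k. k \<in> I \<Longrightarrow> (\<lambda>n. U (\<sigma>s (r n)) (h k) 0 (x (r n))) \<longlonglongrightarrow> \<xi> k"
    and "\<And>k. k \<in> I \<Longrightarrow> U \<sigma> (h k) 0 (\<xi> 0) = \<xi> k"
proof -
  obtain \<sigma> r0 where \<sigma>: "\<sigma> \<in> Sig" "strict_mono r0" "(\<sigma>s \<circ> r0) \<longlonglongrightarrow> \<sigma>"
    using seq_compactE[OF compact_imp_seq_compact[OF assms(2)]] assms(4) by metis
  have "approaches ((\<lambda>n. U (\<sigma>s n) (h k) 0 (x n)) \<circ> r0) K" if "k \<in> I" for k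
    using approaches_subseq[OF assms(5)[OF that] \<sigma>(2)] .
  then obtain r1 where r1: "strict_mono r1"
    "\<And>k. k \<in> I \<Longrightarrow> convergent ((\<lambda>n. U (\<sigma>s n) (h k) 0 (x n)) \<circ> r0 \<circ> r1)"
    using approaches_compact_diagonal_subseq[of I "\<lambda>k. (\<lambda>n. U (\<sigma>s n) (h k) 0 (x n)) \<circ> r0" K]
      assms(3) by blast
  define r where "r = r0 \<circ> r1"
  define \<xi> where "\<xi> k = lim (\<lambda>n. U (\<sigma>s (r n)) (h k) 0 (x (r n)))" for k
  have r: "strict_mono r" unfolding r_def using \<sigma>(2) r1(1) by (rule strict_mono_o)
  have conv: "(\<lambda>n. U (\<sigma>s (r n)) (h k) 0 (x (r n))) \<longlonglongrightarrow> \<xi> k" if "k \<in> I" for k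
    using r1(2)[OF that] unfolding \<xi>_def convergent_LIMSEQ_iff by (simp add: r_def o_def)
  have \<sigma>r: "(\<lambda>n. \<sigma>s (r n)) \<longlonglongrightarrow> \<sigma>"
    using LIMSEQ_subseq_LIMSEQ[OF \<sigma>(3) r1(1)] by (simp add: r_def o_def)
  show thesis
    by (rule that[OF r \<sigma>(1) \<sigma>r conv asymptotically_closedD[OF assms(1) _ \<sigma>(1) \<sigma>r conv]])
      (use assms(4) in simp_all)
qed

locale translation_invariant_processes =
  fixes Sig :: "'b::metric_space set"
    and T :: "real \<Rightarrow> 'b \<Rightarrow> 'b"
    and U :: "'b \<Rightarrow> real \<Rightarrow> real \<Rightarrow> 'a::metric_space \<Rightarrow> 'a"
  assumes compact_Sig: "compact Sig"
    and semigroup: "semigroup_on Sig T"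
    and T_onto: "\<And>h. 0 \<le> h \<Longrightarrow> T h ` Sig = Sig"
    and processes: "process_family Sig U"
    and translation: "\<And>\<sigma> h t \<tau>. \<sigma> \<in> Sig \<Longrightarrow> 0 \<le> h \<Longrightarrow> \<tau> \<le> t \<Longrightarrow>
      U \<sigma> (h + t) (h + \<tau>) = U (T h \<sigma>) t \<tau>"
begin

lemma T_mem: "0 \<le> h \<Longrightarrow> \<sigma> \<in> Sig \<Longrightarrow> T h \<sigma> \<in> Sig"
  using T_onto by blast

lemma T_0: "\<sigma> \<in> Sig \<Longrightarrow> T 0 \<sigma> = \<sigma>"
  using semigroup unfolding semigroup_on_def by blast

lemma T_add: "0 \<le> h1 \<Longrightarrow> 0 \<le> h2 \<Longrightarrow> \<sigma> \<in> Sig \<Longrightarrow> T (h1 + h2) \<sigma> = T h1 (T h2 \<sigma>)"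
  using semigroup unfolding semigroup_on_def by blast

lemma U_id: "\<sigma> \<in> Sig \<Longrightarrow> U \<sigma> \<tau> \<tau> x = x"
  using processes unfolding process_family_def by simp

lemma U_comp: "\<sigma> \<in> Sig \<Longrightarrow> \<tau> \<le> s \<Longrightarrow> s \<le> t \<Longrightarrow> U \<sigma> t \<tau> x = U \<sigma> t s (U \<sigma> s \<tau> x)"
  using processes unfolding process_family_def by simp

lemma U_cocycle:
  assumes "\<sigma> \<in> Sig" "0 \<le> s" "0 \<le> h"
  shows "U \<sigma> (s + h) 0 x = U (T s \<sigma>) h 0 (U \<sigma> s 0 x)"
  using U_comp[OF assms(1), of 0 s "s + h"] translation[OF assms(1,2,3)] assms by simp

lemma backward_chain_process:
  assumes "0 \<le> H" "\<And>m. \<sigma>s m \<in> Sig" "\<And>m. T H (\<sigma>s (Suc m)) = \<sigma>s m"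
  shows "U (\<sigma>s 0) (- (real m * H)) (- (real (Suc m) * H)) = U (\<sigma>s (Suc m)) H 0"
proof -
  have T_iter: "T (real m * H) (\<sigma>s m) = \<sigma>s 0" for m
  proof (induction m)
    case (Suc m)
    have "T (real m * H + H) (\<sigma>s (Suc m)) = T (real m * H) (\<sigma>s m)"
      using T_add[OF _ _ assms(2), of "real m * H" H] assms(1,3) by simp
    then show ?case using Suc by (simp add: algebra_simps)
  qed (simp add: T_0 assms(2))
  have "U (\<sigma>s (Suc m)) (real (Suc m) * H + - (real m * H)) (real (Suc m) * H + - (real (Suc m) * H))
      = U (\<sigma>s 0) (- (real m * H)) (- (real (Suc m) * H))"
    using translation[OF assms(2), of "real (Suc m) * H" "- (real (Suc m) * H)" "- (real m * H)"]
      assms(1) T_iter[of "Suc m"] by (simp add: mult_right_mono)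
  moreover have "real (Suc m) * H + - (real m * H) = H" by (simp add: algebra_simps)
  ultimately show ?thesis by simp
qed

text \<open>Surjectivity of \<open>T h\<close> is what allows initial times \<open>\<tau> < 0\<close>.\<close>

lemma U_shift_to_zero:
  assumes "\<sigma> \<in> Sig" "\<tau> \<le> t"
  obtains \<sigma>' where "\<sigma>' \<in> Sig" "U \<sigma> t \<tau> = U \<sigma>' (t - \<tau>) 0"
proof (cases "0 \<le> \<tau>")
  case True
  then show thesis
    using translation[OF assms(1) True, of 0 "t - \<tau>"] T_mem[OF True assms(1)] assms(2)
    by (intro that) auto
next
  case False
  then have "\<sigma> \<in> T (- \<tau>) ` Sig" using T_onto[of "- \<tau>"] assms(1) by simp
  then obtain \<sigma>' where \<sigma>': "\<sigma>' \<in> Sig" "T (- \<tau>) \<sigma>' = \<sigma>" by auto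
  then show thesis
    using translation[OF \<sigma>'(1), of "- \<tau>" \<tau> t] False assms(2) by (intro that) auto
qed

end

locale uniform_attractor = translation_invariant_processes Sig T U
  for Sig :: "'b::metric_space set"
    and T :: "real \<Rightarrow> 'b \<Rightarrow> 'b"
    and U :: "'b \<Rightarrow> real \<Rightarrow> real \<Rightarrow> 'a::metric_space \<Rightarrow> 'a" +
  fixes A :: "'a set"
  assumes attractor: "uniform_global_attractor Sig U A"
begin

lemma compact_A: "compact A"
  and attracting_A: "uniformly_attracting Sig U A"
  and minimal_A: "compact K \<Longrightarrow> uniformly_attracting Sig U K \<Longrightarrow> A \<subseteq> K"
  using attractor unfolding uniform_global_attractor_def by blast+

definition attractor_nbhd :: "'a set" where
  "attractor_nbhd = {y. \<exists>k\<in>A. dist y k < 1}"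

lemma bounded_attractor_nbhd: "bounded attractor_nbhd"
  unfolding attractor_nbhd_def by (rule bounded_thickening[OF compact_imp_bounded[OF compact_A]])

lemma attractor_nbhd_absorbing:
  assumes "bounded C"
  obtains L where "\<And>\<sigma> t \<tau> x. \<tau> \<le> t \<Longrightarrow> L \<le> t - \<tau> \<Longrightarrow> \<sigma> \<in> Sig \<Longrightarrow> x \<in> C \<Longrightarrow> U \<sigma> t \<tau> x \<in> attractor_nbhd"
proof -
  obtain L where L: "\<forall>t \<tau>. \<tau> \<le> t \<and> L \<le> t - \<tau> \<longrightarrow> (\<forall>\<sigma>\<in>Sig. \<forall>x\<in>C. \<exists>k\<in>A. dist (U \<sigma> t \<tau> x) k < 1)"
    using attracting_A[unfolded uniformly_attracting_def, rule_format, OF assms zero_less_one] by blast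
  show thesis by (rule that[of L]) (use L in \<open>auto simp: attractor_nbhd_def\<close>)
qed

lemma uniformly_attracting_minus_ball:
  assumes "0 < r"
    and far: "\<And>\<sigma> s x. \<sigma> \<in> Sig \<Longrightarrow> L \<le> s \<Longrightarrow> x \<in> attractor_nbhd \<Longrightarrow> r \<le> dist (U \<sigma> s 0 x) a"
  shows "uniformly_attracting Sig U (A - ball a (r/2))"
  unfolding uniformly_attracting_def
proof (intro allI impI)
  fix C :: "'a set" and e :: real assume C: "bounded C" and "0 < e"
  obtain L1 where L1: "\<And>\<sigma> t \<tau> x. \<tau> \<le> t \<Longrightarrow> L1 \<le> t - \<tau> \<Longrightarrow> \<sigma> \<in> Sig \<Longrightarrow> x \<in> C \<Longrightarrow>
      U \<sigma> t \<tau> x \<in> attractor_nbhd"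
    using attractor_nbhd_absorbing[OF C] by blast
  have "0 < min e (r/2)" using \<open>0 < e\<close> assms(1) by simp
  then obtain L2 where L2: "\<And>t \<tau>. \<tau> \<le> t \<Longrightarrow> L2 \<le> t - \<tau> \<Longrightarrow>
      \<forall>\<sigma>\<in>Sig. \<forall>x\<in>C. \<exists>k\<in>A. dist (U \<sigma> t \<tau> x) k < min e (r/2)"
    using attracting_A C unfolding uniformly_attracting_def by meson
  show "\<exists>L'. \<forall>t \<tau>. \<tau> \<le> t \<and> L' \<le> t - \<tau> \<longrightarrow> (\<forall>\<sigma>\<in>Sig. \<forall>x\<in>C. \<exists>k\<in>A - ball a (r/2). dist (U \<sigma> t \<tau> x) k < e)"
  proof (intro exI[of _ "max L1 0 + max L 0 + max L2 0"] allI impI ballI)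
    fix t \<tau> \<sigma> x assume tt: "\<tau> \<le> t \<and> max L1 0 + max L 0 + max L2 0 \<le> t - \<tau>"
      and \<sigma>: "\<sigma> \<in> Sig" and x: "x \<in> C"
    have max: "L1 \<le> max L1 0" "L \<le> max L 0" "L2 \<le> max L2 0" "0 \<le> max L1 0" "0 \<le> max L 0" "0 \<le> max L2 0"
      by simp_all
    define s where "s = \<tau> + max L1 0"
    have s: "\<tau> \<le> s" "s \<le> t" "L \<le> t - s" "L1 \<le> s - \<tau>" using tt max unfolding s_def by linarith+
    obtain \<sigma>' where \<sigma>': "\<sigma>' \<in> Sig" "U \<sigma> t s = U \<sigma>' (t - s) 0"
      using U_shift_to_zero[OF \<sigma> s(2)] by blast
    have "U \<sigma> t \<tau> x = U \<sigma>' (t - s) 0 (U \<sigma> s \<tau> x)"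
      using U_comp[OF \<sigma> s(1,2)] \<sigma>'(2) by simp
    then have "r \<le> dist (U \<sigma> t \<tau> x) a"
      using far[OF \<sigma>'(1) s(3) L1[OF s(1,4) \<sigma> x]] by simp
    moreover have "L2 \<le> t - \<tau>" using tt max by linarith
    then obtain k where k: "k \<in> A" "dist (U \<sigma> t \<tau> x) k < min e (r/2)"
      using L2[of \<tau> t] tt \<sigma> x by blast
    ultimately have "k \<in> A - ball a (r/2)"
      using dist_triangle[of a "U \<sigma> t \<tau> x" k] by (auto simp: dist_commute)
    with k(2) show "\<exists>k\<in>A - ball a (r/2). dist (U \<sigma> t \<tau> x) k < e" by auto
  qed
qed

text \<open>Minimality of \<open>A\<close>: if late states started in the absorbing set avoided
  \<open>ball a r\<close>, then \<open>A - ball a (r/2)\<close> would be a smaller compact attracting set.\<close>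

lemma attractor_point_reachable:
  assumes "a \<in> A" "0 < r"
  shows "\<exists>\<sigma>\<in>Sig. \<exists>s\<ge>L. \<exists>x\<in>attractor_nbhd. dist (U \<sigma> s 0 x) a < r"
proof (rule ccontr)
  assume "\<not> ?thesis"
  then have "uniformly_attracting Sig U (A - ball a (r/2))"
    by (intro uniformly_attracting_minus_ball[where L=L, OF assms(2)]) (meson not_less)
  then have "A \<subseteq> A - ball a (r/2)"
    using minimal_A compact_A by (simp add: compact_diff)
  then show False using assms by auto
qed

text \<open>\<open>(\<sigma>, \<xi>)\<close> is an \<open>\<omega>\<close>-limit point of the skew-product semiflow
  \<open>(\<sigma>, x) \<mapsto> (T s \<sigma>, U \<sigma> s 0 x)\<close> started in \<open>Sig \<times> attractor_nbhd\<close>.\<close>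

definition skew_omega_limit :: "'b \<Rightarrow> 'a \<Rightarrow> bool" where
  "skew_omega_limit \<sigma> \<xi> \<longleftrightarrow> (\<exists>\<sigma>s s w. (\<forall>n. \<sigma>s n \<in> Sig \<and> 0 \<le> s n \<and> w n \<in> attractor_nbhd) \<and>
     filterlim s at_top sequentially \<and> (\<lambda>n. T (s n) (\<sigma>s n)) \<longlonglongrightarrow> \<sigma> \<and>
     (\<lambda>n. U (\<sigma>s n) (s n) 0 (w n)) \<longlonglongrightarrow> \<xi>)"

lemma skew_omega_limit_mem:
  assumes "skew_omega_limit \<sigma> \<xi>"
  shows "\<sigma> \<in> Sig" "\<xi> \<in> A"
proof -
  obtain \<sigma>s s w where lim: "\<And>n. \<sigma>s n \<in> Sig" "\<And>n. 0 \<le> s n" "\<And>n. w n \<in> attractor_nbhd"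
    "filterlim s at_top sequentially" "(\<lambda>n. T (s n) (\<sigma>s n)) \<longlonglongrightarrow> \<sigma>"
    "(\<lambda>n. U (\<sigma>s n) (s n) 0 (w n)) \<longlonglongrightarrow> \<xi>"
    using assms unfolding skew_omega_limit_def by blast
  show "\<sigma> \<in> Sig"
    using closed_sequentially[OF compact_imp_closed[OF compact_Sig] _ lim(5)] T_mem lim(1,2)
    by blast
  have "approaches (\<lambda>n. U (\<sigma>s n) (s n) 0 (w n)) A"
    using uniformly_attracting_approaches[OF attracting_A bounded_attractor_nbhd, of \<sigma>s w "\<lambda>_. 0" s]
      lim by simp
  then show "\<xi> \<in> A"
    using approaches_limit_mem lim(6) compact_imp_closed[OF compact_A] by blast
qed

lemma attractor_skew_omega_limit:
  assumes "a \<in> A"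
  obtains \<sigma> where "skew_omega_limit \<sigma> a"
proof -
  have "\<exists>\<sigma> s x. \<sigma> \<in> Sig \<and> real n \<le> s \<and> x \<in> attractor_nbhd \<and> dist (U \<sigma> s 0 x) a < inverse (real (Suc n))"
    for n using attractor_point_reachable[OF assms, of "inverse (real (Suc n))" "real n"] by auto
  then obtain \<sigma>s s w where sw: "\<And>n. \<sigma>s n \<in> Sig" "\<And>n. real n \<le> s n" "\<And>n. w n \<in> attractor_nbhd"
    "\<And>n. dist (U (\<sigma>s n) (s n) 0 (w n)) a < inverse (real (Suc n))"
    by metis
  have "(\<lambda>n. dist (U (\<sigma>s n) (s n) 0 (w n)) a) \<longlonglongrightarrow> 0"
    using sw(4) by (intro tendsto_sandwich[OF _ _ tendsto_const LIMSEQ_inverse_real_of_nat])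
      (auto intro!: always_eventually less_imp_le)
  then have lim: "(\<lambda>n. U (\<sigma>s n) (s n) 0 (w n)) \<longlonglongrightarrow> a"
    by (rule tendsto_dist_iff[THEN iffD2])
  have s: "filterlim s at_top sequentially"
    using filterlim_at_top_mono[OF filterlim_real_sequentially] sw(2) by simp
  have s0: "0 \<le> s n" for n using sw(2)[of n] by linarith
  obtain \<sigma> r where r: "strict_mono r" "((\<lambda>n. T (s n) (\<sigma>s n)) \<circ> r) \<longlonglongrightarrow> \<sigma>"
    using seq_compactE[OF compact_imp_seq_compact[OF compact_Sig]] T_mem s0 sw(1) by metis
  have "skew_omega_limit \<sigma> a"
    unfolding skew_omega_limit_def
  proof (intro exI[of _ "\<sigma>s \<circ> r"] exI[of _ "s \<circ> r"] exI[of _ "w \<circ> r"] conjI)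
    show "filterlim (s \<circ> r) at_top sequentially"
      unfolding o_def by (rule filterlim_compose[OF s filterlim_subseq[OF r(1)]])
  qed (use sw s0 r LIMSEQ_subseq_LIMSEQ[OF lim r(1)] in \<open>auto simp: o_def\<close>)
  then show thesis by (rule that)
qed

lemma skew_omega_limit_delay:
  assumes "skew_omega_limit \<sigma> \<xi>" "0 \<le> H"
  obtains \<sigma>s s w where "\<And>n. \<sigma>s n \<in> Sig" "\<And>n. 0 \<le> s n" "\<And>n. w n \<in> attractor_nbhd"
    and "filterlim s at_top sequentially"
    and "(\<lambda>n. T (s n + H) (\<sigma>s n)) \<longlonglongrightarrow> \<sigma>" "(\<lambda>n. U (\<sigma>s n) (s n + H) 0 (w n)) \<longlonglongrightarrow> \<xi>"
proof -
  obtain \<sigma>s s w where seq: "\<And>n. \<sigma>s n \<in> Sig" "\<And>n. w n \<in> attractor_nbhd"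
    and s: "filterlim s at_top sequentially"
    and lim: "(\<lambda>n. T (s n) (\<sigma>s n)) \<longlonglongrightarrow> \<sigma>" "(\<lambda>n. U (\<sigma>s n) (s n) 0 (w n)) \<longlonglongrightarrow> \<xi>"
    using assms(1) unfolding skew_omega_limit_def by blast
  define s' where "s' n = max 0 (s n - H)" for n
  have s': "filterlim s' at_top sequentially"
    and delay: "eventually (\<lambda>n. s' n + H = s n) sequentially"
    unfolding s'_def by (rule filterlim_at_top_delay[OF s])+
  have "(\<lambda>n. T (s' n + H) (\<sigma>s n)) \<longlonglongrightarrow> \<sigma>"
    using lim(1) by (rule Lim_transform_eventually) (use delay in \<open>auto elim: eventually_mono\<close>)
  moreover have "(\<lambda>n. U (\<sigma>s n) (s' n + H) 0 (w n)) \<longlonglongrightarrow> \<xi>"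
    using lim(2) by (rule Lim_transform_eventually) (use delay in \<open>auto elim: eventually_mono\<close>)
  ultimately show thesis
    using that[OF seq(1) _ seq(2) s'] by (simp add: s'_def)
qed

context
  fixes I :: "nat set" and h :: "nat \<Rightarrow> real"
  assumes admissible: "admissible_seq I h"
    and closed: "asymptotically_closed Sig U I h"
    and continuous_T: "continuous_on Sig (T (h 1))"
begin

text \<open>Realize \<open>(\<sigma>, \<xi>)\<close> with times delayed by \<open>h 1\<close>; asymptotic closedness, applied
  along a diagonal subsequence, identifies the limit of the undelayed states as a preimage.\<close>

lemma skew_omega_limit_backward:
  assumes "skew_omega_limit \<sigma> \<xi>"
  obtains \<sigma>' \<xi>' where "skew_omega_limit \<sigma>' \<xi>'" "T (h 1) \<sigma>' = \<sigma>" "U \<sigma>' (h 1) 0 \<xi>' = \<xi>"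
proof -
  have I01: "0 \<in> I" "1 \<in> I" and h0: "h 0 = 0" and H: "0 < h 1"
    and h_nonneg: "\<And>k. k \<in> I \<Longrightarrow> 0 \<le> h k"
    using admissible_seqD[OF admissible] by blast+
  obtain \<sigma>s s w where seq: "\<And>n. \<sigma>s n \<in> Sig" "\<And>n. 0 \<le> s n" "\<And>n. w n \<in> attractor_nbhd"
    and s: "filterlim s at_top sequentially"
    and lim: "(\<lambda>n. T (s n + h 1) (\<sigma>s n)) \<longlonglongrightarrow> \<sigma>" "(\<lambda>n. U (\<sigma>s n) (s n + h 1) 0 (w n)) \<longlonglongrightarrow> \<xi>"
    using skew_omega_limit_delay[OF assms less_imp_le[OF H]] by blast
  define \<tau>s where "\<tau>s n = T (s n) (\<sigma>s n)" for n
  define v where "v n = U (\<sigma>s n) (s n) 0 (w n)" for n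
  have \<tau>s: "\<tau>s n \<in> Sig" for n unfolding \<tau>s_def using T_mem seq by blast
  have delayed: "U (\<tau>s n) (h k) 0 (v n) = U (\<sigma>s n) (s n + h k) 0 (w n)" if "k \<in> I" for k n
    using U_cocycle[OF seq(1,2) h_nonneg[OF that]] by (simp add: \<tau>s_def v_def)
  have "approaches (\<lambda>n. U (\<tau>s n) (h k) 0 (v n)) A" if "k \<in> I" for k
  proof -
    have "filterlim (\<lambda>n. s n + h k - 0) at_top sequentially"
      using filterlim_tendsto_add_at_top[OF tendsto_const s, of "h k"] by (simp add: add.commute)
    then show ?thesis
      using uniformly_attracting_approaches[OF attracting_A bounded_attractor_nbhd,
          of \<sigma>s w "\<lambda>_. 0" "\<lambda>n. s n + h k"] seq h_nonneg[OF that]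
      by (simp add: delayed[OF that])
  qed
  then obtain r \<sigma>' \<xi>s where r: "strict_mono r" "\<sigma>' \<in> Sig" "(\<lambda>n. \<tau>s (r n)) \<longlonglongrightarrow> \<sigma>'"
    and conv: "\<And>k. k \<in> I \<Longrightarrow> (\<lambda>n. U (\<tau>s (r n)) (h k) 0 (v (r n))) \<longlonglongrightarrow> \<xi>s k"
    and flow: "\<And>k. k \<in> I \<Longrightarrow> U \<sigma>' (h k) 0 (\<xi>s 0) = \<xi>s k"
    using asymptotically_closed_convergent_subseq[where \<sigma>s=\<tau>s and x=v, OF closed compact_Sig compact_A \<tau>s]
    by blast
  have "(\<lambda>n. U (\<tau>s (r n)) (h 1) 0 (v (r n))) \<longlonglongrightarrow> \<xi>"
    using LIMSEQ_subseq_LIMSEQ[OF lim(2) r(1)] delayed[OF I01(2)] by (simp add: o_def)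
  then have "\<xi>s 1 = \<xi>" using conv[OF I01(2)] LIMSEQ_unique by blast
  moreover have "T (h 1) \<sigma>' = \<sigma>"
  proof -
    have "T (h 1) (\<tau>s n) = T (s n + h 1) (\<sigma>s n)" for n
      using T_add[OF less_imp_le[OF H] seq(2,1)] by (simp add: \<tau>s_def add.commute)
    then have "(\<lambda>n. T (h 1) (\<tau>s (r n))) \<longlonglongrightarrow> \<sigma>"
      using LIMSEQ_subseq_LIMSEQ[OF lim(1) r(1)] by (simp add: o_def)
    moreover have "(\<lambda>n. T (h 1) (\<tau>s (r n))) \<longlonglongrightarrow> T (h 1) \<sigma>'"
      using continuous_on_tendsto_compose[OF continuous_T r(3) r(2)] \<tau>s by simp
    ultimately show ?thesis by (rule LIMSEQ_unique[symmetric])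
  qed
  moreover have "skew_omega_limit \<sigma>' (\<xi>s 0)"
    unfolding skew_omega_limit_def
  proof (intro exI[of _ "\<sigma>s \<circ> r"] exI[of _ "s \<circ> r"] exI[of _ "w \<circ> r"] conjI allI)
    show "filterlim (s \<circ> r) at_top sequentially"
      unfolding o_def by (rule filterlim_compose[OF s filterlim_subseq[OF r(1)]])
    show "(\<lambda>n. T ((s \<circ> r) n) ((\<sigma>s \<circ> r) n)) \<longlonglongrightarrow> \<sigma>'"
      using r(3) by (simp add: \<tau>s_def)
    show "(\<lambda>n. U ((\<sigma>s \<circ> r) n) ((s \<circ> r) n) 0 ((w \<circ> r) n)) \<longlonglongrightarrow> \<xi>s 0"
      using conv[OF I01(1)] by (simp add: h0 U_id \<tau>s v_def)
  qed (simp_all add: seq)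
  ultimately show thesis using that flow[OF I01(2)] by simp
qed

lemma skew_omega_limit_backward_chain:
  assumes "skew_omega_limit \<sigma> \<xi>"
  obtains \<sigma>s \<xi>s where "\<sigma>s 0 = \<sigma>" "\<xi>s 0 = \<xi>" "\<And>m. skew_omega_limit (\<sigma>s m) (\<xi>s m)"
    and "\<And>m. T (h 1) (\<sigma>s (Suc m)) = \<sigma>s m" "\<And>m. U (\<sigma>s (Suc m)) (h 1) 0 (\<xi>s (Suc m)) = \<xi>s m"
proof -
  define P where "P m p \<longleftrightarrow> skew_omega_limit (fst p) (snd p) \<and> (m = 0 \<longrightarrow> p = (\<sigma>, \<xi>))"
    for m :: nat and p :: "'b \<times> 'a"
  define Q where "Q p q \<longleftrightarrow> T (h 1) (fst q) = fst p \<and> U (fst q) (h 1) 0 (snd q) = snd p"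
    for p q :: "'b \<times> 'a"
  have "\<exists>p. P 0 p" using assms by (auto simp: P_def)
  moreover have "\<exists>q. P (Suc m) q \<and> Q p q" if p: "P m p" for m p
  proof -
    obtain \<sigma>' \<xi>' where "skew_omega_limit \<sigma>' \<xi>'" "T (h 1) \<sigma>' = fst p" "U \<sigma>' (h 1) 0 \<xi>' = snd p"
      using skew_omega_limit_backward[of "fst p" "snd p"] p unfolding P_def by blast
    then show ?thesis by (intro exI[of _ "(\<sigma>', \<xi>')"]) (simp add: P_def Q_def)
  qed
  ultimately obtain c where "\<And>m. P m (c m) \<and> Q (c m) (c (Suc m))"
    using dependent_nat_choice[of P "\<lambda>_. Q"] by blast
  then show thesis
    by (intro that[of "fst \<circ> c" "snd \<circ> c"]) (auto simp: P_def Q_def)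
qed

lemma attractor_subset_kernel_sections:
  assumes "a \<in> A"
  obtains \<sigma> where "\<sigma> \<in> Sig" "a \<in> kernel_section U \<sigma> 0"
proof -
  have H: "0 < h 1" using admissible_seqD(4)[OF admissible] .
  obtain \<sigma>0 where "skew_omega_limit \<sigma>0 a" using attractor_skew_omega_limit[OF assms] .
  then obtain \<sigma>s \<xi>s where chain: "\<sigma>s 0 = \<sigma>0" "\<xi>s 0 = a" "\<And>m. skew_omega_limit (\<sigma>s m) (\<xi>s m)"
    "\<And>m. T (h 1) (\<sigma>s (Suc m)) = \<sigma>s m" "\<And>m. U (\<sigma>s (Suc m)) (h 1) 0 (\<xi>s (Suc m)) = \<xi>s m"
    using skew_omega_limit_backward_chain by blast
  have \<sigma>s: "\<sigma>s m \<in> Sig" and \<xi>s: "\<xi>s m \<in> A" for m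
    using skew_omega_limit_mem chain(3) by blast+
  have \<sigma>0: "\<sigma>0 \<in> Sig" using \<sigma>s chain(1) by metis
  define p where "p m = - (real m * h 1)" for m
  have p_dec: "decseq p" unfolding p_def decseq_def using H by (simp add: mult_right_mono)
  have p_unbounded: "\<exists>m. p m \<le> t" for t
    using ex_less_of_nat_mult[OF H, of "- t"] unfolding p_def by (metis less_imp_le minus_le_iff)
  have orbit: "U \<sigma>0 (p m) (p (Suc m)) (\<xi>s (Suc m)) = \<xi>s m" for m
    using backward_chain_process[where \<sigma>s=\<sigma>s, OF less_imp_le[OF H] \<sigma>s chain(4)] chain(1,5) by (simp add: p_def)
  obtain x where x_traj: "\<And>s \<tau>. \<tau> \<le> s \<Longrightarrow> x s = U \<sigma>0 s \<tau> (x \<tau>)"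
    and x_orbit: "\<And>t m. p m \<le> t \<Longrightarrow> x t = U \<sigma>0 t (p m) (\<xi>s m)"
    using process_backward_orbit_trajectory[OF processes \<sigma>0 p_dec p_unbounded orbit] by blast
  have "x 0 = a" using x_orbit[of 0 0] U_id[OF \<sigma>0] chain(2) by (simp add: p_def)
  obtain L where L: "\<And>\<sigma> t \<tau> y. \<tau> \<le> t \<Longrightarrow> L \<le> t - \<tau> \<Longrightarrow> \<sigma> \<in> Sig \<Longrightarrow> y \<in> A \<Longrightarrow>
      U \<sigma> t \<tau> y \<in> attractor_nbhd"
    using attractor_nbhd_absorbing[OF compact_imp_bounded[OF compact_A]] by blast
  have "x t \<in> attractor_nbhd" for t
  proof -
    obtain m where m: "p m \<le> t - max L 0" using p_unbounded by blast
    moreover have "L \<le> max L 0" "0 \<le> max L 0" by simp_all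
    ultimately have "p m \<le> t" "L \<le> t - p m" by linarith+
    then show ?thesis using x_orbit L \<sigma>0 \<xi>s by simp
  qed
  then have "range x \<subseteq> attractor_nbhd" by blast
  then have "bounded (range x)" by (rule bounded_subset[OF bounded_attractor_nbhd])
  with x_traj have "complete_bounded_trajectory U \<sigma>0 x"
    unfolding complete_bounded_trajectory_def by blast
  then show thesis using that[OF \<sigma>0] \<open>x 0 = a\<close> unfolding kernel_section_def by blast
qed

end

end

theorem theorem6p6:
  fixes Sig :: "'b::metric_space set"
    and T :: "real \<Rightarrow> 'b \<Rightarrow> 'b"
    and U :: "'b \<Rightarrow> real \<Rightarrow> real \<Rightarrow> 'a::metric_space \<Rightarrow> 'a"
    and A :: "'a set"
    and I :: "nat set" and h :: "nat \<Rightarrow> real"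
  assumes "compact Sig"
    and "semigroup_on Sig T"
    and "\<forall>h\<ge>0. T h ` Sig = Sig"
    and "process_family Sig U"
    and "\<forall>\<sigma>\<in>Sig. \<forall>h\<ge>0. \<forall>t \<tau>. \<tau> \<le> t \<longrightarrow> U \<sigma> (h + t) (h + \<tau>) = U (T h \<sigma>) t \<tau>"
    and "uniformly_asymptotically_compact Sig U"
    and "uniform_global_attractor Sig U A"
    and "admissible_seq I h"
    and "asymptotically_closed Sig U I h"
    and "\<forall>k\<in>I. continuous_on Sig (T (h k))"
  shows "A = (\<Union>\<sigma>\<in>Sig. kernel_section U \<sigma> 0)"
proof -
  interpret uniform_attractor Sig T U A
    by unfold_locales (use assms(1-5,7) in blast)+
  have "continuous_on Sig (T (h 1))"
    using assms(10) admissible_seqD(2)[OF assms(8)] by blast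
  show ?thesis
  proof
    show "A \<subseteq> (\<Union>\<sigma>\<in>Sig. kernel_section U \<sigma> 0)"
      using attractor_subset_kernel_sections[OF assms(8,9) \<open>continuous_on Sig (T (h 1))\<close>] by blast
    show "(\<Union>\<sigma>\<in>Sig. kernel_section U \<sigma> 0) \<subseteq> A"
      using kernel_section_subset_attracting[OF attracting_A compact_imp_closed[OF compact_A]] by blast
  qed
qed

end
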